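(* Let $\Gamma$ be a locally finite vertex-transitive weighted graph with distinguished vertex $e$. Let $x,y$ be vertices and suppose there exists a finitely supported non-zero function $f:\Gamma\to\mathbb{R}$ that is harmonic at every vertex other than $x$ and $y$. Then there exists $N>0$ such that the conditional probability $\mathbb{P}_g[\,T_x<T_y\mid\min\{T_x,T_y\}<\infty\,]$ is independent of $g$ for all vertices $g$ with $d(e,g)\ge N$.
   Context: Weighted graph: undirected, no loops or multiple edges, weights $\omega_{xy}=\omega_{yx}>0$, $\deg x=\sum_{y\sim x}\omega_{xy}$; vertex-transitive means the group of weight-preserving automorphisms acts transitively on vertices. $f$ is harmonic at $z$ if $f(z)=\frac{1}{\deg z}\sum_{w\sim z}\omega_{zw}f(w)$. $d$ is the graph metric. $(X_t)_{t\ge0}$ is the random walk stepping from $z$ to neighbour $w$ with probability $\omega_{zw}/\deg z$; $\mathbb{P}_g$ is its law started at $X_0=g$, and $T_z=\inf\{t\ge0:X_t=z\}$ (with $\inf\emptyset=\infty$). *)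

theory Defs
  imports "HOL-Probability.Probability"
begin

definition weighted_graph :: "('v \<Rightarrow> 'v \<Rightarrow> real) \<Rightarrow> bool" where
  "weighted_graph w \<longleftrightarrow> (\<forall>x y. w x y = w y x) \<and> (\<forall>x y. w x y \<ge> 0) \<and> (\<forall>x. w x x = 0)"

definition adj :: "('v \<Rightarrow> 'v \<Rightarrow> real) \<Rightarrow> 'v \<Rightarrow> 'v \<Rightarrow> bool" where
  "adj w x y \<longleftrightarrow> w x y > 0"

definition nbrs :: "('v \<Rightarrow> 'v \<Rightarrow> real) \<Rightarrow> 'v \<Rightarrow> 'v set" where
  "nbrs w x = {y. adj w x y}"

definition locally_finite :: "('v \<Rightarrow> 'v \<Rightarrow> real) \<Rightarrow> bool" where
  "locally_finite w \<longleftrightarrow> (\<forall>x. finite (nbrs w x))"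

definition deg :: "('v \<Rightarrow> 'v \<Rightarrow> real) \<Rightarrow> 'v \<Rightarrow> real" where
  "deg w x = (\<Sum>y\<in>nbrs w x. w x y)"

definition vertex_transitive :: "('v \<Rightarrow> 'v \<Rightarrow> real) \<Rightarrow> bool" where
  "vertex_transitive w \<longleftrightarrow>
     (\<forall>a b. \<exists>\<sigma>. bij \<sigma> \<and> (\<forall>u v. w (\<sigma> u) (\<sigma> v) = w u v) \<and> \<sigma> a = b)"

text \<open>Connectedness (so that the graph metric is finite).\<close>
definition connected_graph :: "('v \<Rightarrow> 'v \<Rightarrow> real) \<Rightarrow> bool" where
  "connected_graph w \<longleftrightarrow> (\<forall>a b. \<exists>n. (adj w ^^ n) a b)"

definition gdist :: "('v \<Rightarrow> 'v \<Rightarrow> real) \<Rightarrow> 'v \<Rightarrow> 'v \<Rightarrow> nat" where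
  "gdist w a b = (LEAST n. (adj w ^^ n) a b)"

definition harmonic_at :: "('v \<Rightarrow> 'v \<Rightarrow> real) \<Rightarrow> ('v \<Rightarrow> real) \<Rightarrow> 'v \<Rightarrow> bool" where
  "harmonic_at w f z \<longleftrightarrow> f z = (1 / deg w z) * (\<Sum>u\<in>nbrs w z. w z u * f u)"

definition step :: "('v \<Rightarrow> 'v \<Rightarrow> real) \<Rightarrow> 'v \<Rightarrow> 'v pmf" where
  "step w z = embed_pmf (\<lambda>u. w z u / deg w z)"

primrec walk :: "('v \<Rightarrow> 'v \<Rightarrow> real) \<Rightarrow> nat \<Rightarrow> 'v \<Rightarrow> 'v list pmf" where
  "walk w 0 g = return_pmf [g]"
| "walk w (Suc n) g = bind_pmf (walk w n g) (\<lambda>p. map_pmf (\<lambda>u. p @ [u]) (step w (last p)))"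

text \<open>P_g[T_x < T_y]: the events {T_x < T_y, T_x \<le> n} increase to {T_x < T_y}.\<close>
definition hit_first :: "('v \<Rightarrow> 'v \<Rightarrow> real) \<Rightarrow> 'v \<Rightarrow> 'v \<Rightarrow> 'v \<Rightarrow> real" where
  "hit_first w g x y = (SUP n. measure_pmf.prob (walk w n g)
      {p. x \<in> set p \<and> y \<notin> set (takeWhile (\<lambda>v. v \<noteq> x) p)})"

definition hit_either :: "('v \<Rightarrow> 'v \<Rightarrow> real) \<Rightarrow> 'v \<Rightarrow> 'v \<Rightarrow> 'v \<Rightarrow> real" where
  "hit_either w g x y = (SUP n. measure_pmf.prob (walk w n g) {p. x \<in> set p \<or> y \<in> set p})"

definition cond_hit :: "('v \<Rightarrow> 'v \<Rightarrow> real) \<Rightarrow> 'v \<Rightarrow> 'v \<Rightarrow> 'v \<Rightarrow> real" where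
  "cond_hit w g x y = hit_first w g x y / hit_either w g x y"

end

theory Submission
  imports Defs
begin

text \<open>Write \<open>P\<close> for the transition operator and \<open>Q\<close> for the walk killed on \<open>{x, y}\<close>.
  Since \<open>f\<close> is harmonic off \<open>{x, y}\<close>, iterating \<open>f = P f\<close> gives
  \<open>f g = f x \<cdot> P\<^sub>g[T\<^sub>x < T\<^sub>y, T\<^sub>x \<le> n] + f y \<cdot> P\<^sub>g[T\<^sub>y < T\<^sub>x, T\<^sub>y \<le> n] + Q\<^sup>n f\<^sub>0 g\<close>,
  where \<open>f\<^sub>0\<close> is \<open>f\<close> with its values at \<open>x, y\<close> erased. The remainder tends to \<open>0\<close>:
  \<open>f\<^sup>2\<close> is subharmonic with defect the local variance \<open>\<sigma>\<close>, so \<open>\<Sum>\<^sub>k Q\<^sup>k \<sigma>\<close> is bounded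
  by \<open>max f\<^sup>2\<close> and the walk spends finite expected time where \<open>\<sigma> > 0\<close>; the remaining
  support of \<open>f\<^sub>0\<close> is a finite set on which \<open>f\<close> is locally constant, which the walk
  leaves geometrically fast and can only re-enter through points where \<open>\<sigma> > 0\<close>.
  Hence \<open>f g = f x \<cdot> P\<^sub>g[T\<^sub>x < T\<^sub>y] + f y \<cdot> P\<^sub>g[T\<^sub>y < T\<^sub>x]\<close>, and far from the support of \<open>f\<close>
  the left-hand side vanishes, which pins down the conditional probability as
  \<open>f y / (f y - f x)\<close>.\<close>

lemma measure_bind_pmf:
  "measure_pmf.prob (bind_pmf M N) X = (\<integral>x. measure_pmf.prob (N x) X \<partial>measure_pmf M)"
proof -
  interpret subprob_space "measure_pmf M" by (rule prob_space_imp_subprob_space) unfold_locales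
  have "(\<lambda>x. measure_pmf (N x)) \<in> measurable (measure_pmf M) (subprob_algebra (count_space UNIV))"
    using measurable_measure_pmf[of N] by simp
  then show ?thesis unfolding measure_pmf_bind
    by (subst measure_pmf.measure_bind) auto
qed

lemma walk_nonempty: "p \<in> set_pmf (walk w n g) \<Longrightarrow> p \<noteq> []"
  by (induction n arbitrary: p) auto

lemma walk_Suc_first_step:
  "walk w (Suc n) g = bind_pmf (step w g) (\<lambda>u. map_pmf ((#) g) (walk w n u))"
proof (induction n arbitrary: g)
  case 0
  then show ?case by (simp add: bind_return_pmf map_pmf_def)
next
  case (Suc n)
  have "walk w (Suc (Suc n)) g
      = bind_pmf (walk w (Suc n) g) (\<lambda>p. map_pmf (\<lambda>u. p @ [u]) (step w (last p)))"
    by simp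
  also have "\<dots> = bind_pmf (step w g) (\<lambda>u. bind_pmf (map_pmf ((#) g) (walk w n u))
                    (\<lambda>p. map_pmf (\<lambda>v. p @ [v]) (step w (last p))))"
    by (subst Suc) (simp add: bind_assoc_pmf del: walk.simps)
  also have "\<dots> = bind_pmf (step w g) (\<lambda>u. map_pmf ((#) g) (walk w (Suc n) u))"
  proof (rule bind_pmf_cong[OF refl])
    fix u
    have "bind_pmf (map_pmf ((#) g) (walk w n u)) (\<lambda>p. map_pmf (\<lambda>v. p @ [v]) (step w (last p)))
        = bind_pmf (walk w n u) (\<lambda>p. map_pmf ((#) g) (map_pmf (\<lambda>v. p @ [v]) (step w (last p))))"
      by (simp add: bind_map_pmf)
        (rule bind_pmf_cong[OF refl], auto dest: walk_nonempty simp: pmf.map_comp o_def)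
    also have "\<dots> = map_pmf ((#) g) (walk w (Suc n) u)"
      by (simp add: map_bind_pmf)
    finally show "bind_pmf (map_pmf ((#) g) (walk w n u))
        (\<lambda>p. map_pmf (\<lambda>v. p @ [v]) (step w (last p))) = map_pmf ((#) g) (walk w (Suc n) u)" .
  qed
  finally show ?case .
qed

lemma prob_walk_Suc:
  "measure_pmf.prob (walk w (Suc n) g) E
     = (\<integral>u. measure_pmf.prob (walk w n u) ((#) g -` E) \<partial>measure_pmf (step w g))"
  by (subst walk_Suc_first_step) (simp add: measure_bind_pmf del: walk.simps)

definition transition_op :: "('v \<Rightarrow> 'v \<Rightarrow> real) \<Rightarrow> ('v \<Rightarrow> real) \<Rightarrow> 'v \<Rightarrow> real" where
  "transition_op w h z = (\<Sum>u\<in>nbrs w z. w z u / deg w z * h u)"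

definition killed_op :: "('v \<Rightarrow> 'v \<Rightarrow> real) \<Rightarrow> 'v set \<Rightarrow> ('v \<Rightarrow> real) \<Rightarrow> 'v \<Rightarrow> real" where
  "killed_op w K h z = (if z \<in> K then 0 else transition_op w h z)"

primrec stay_prob :: "('v \<Rightarrow> 'v \<Rightarrow> real) \<Rightarrow> 'v set \<Rightarrow> nat \<Rightarrow> 'v \<Rightarrow> real" where
  "stay_prob w C 0 z = indicator C z"
| "stay_prob w C (Suc m) z = (if z \<in> C then transition_op w (stay_prob w C m) z else 0)"

definition hit_before :: "('v \<Rightarrow> 'v \<Rightarrow> real) \<Rightarrow> 'v \<Rightarrow> 'v \<Rightarrow> nat \<Rightarrow> 'v \<Rightarrow> real" where
  "hit_before w a b n g =
     measure_pmf.prob (walk w n g) {p. a \<in> set p \<and> b \<notin> set (takeWhile (\<lambda>v. v \<noteq> a) p)}"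

definition hit_within :: "('v \<Rightarrow> 'v \<Rightarrow> real) \<Rightarrow> 'v \<Rightarrow> 'v \<Rightarrow> nat \<Rightarrow> 'v \<Rightarrow> real" where
  "hit_within w a b n g = measure_pmf.prob (walk w n g) {p. a \<in> set p \<or> b \<in> set p}"

locale random_walk_graph =
  fixes w :: "'v \<Rightarrow> 'v \<Rightarrow> real"
  assumes weighted: "weighted_graph w" and connected: "connected_graph w"
    and loc_finite: "locally_finite w" and nontrivial: "\<exists>a b::'v. a \<noteq> b"
begin

lemma w_sym: "w a b = w b a" and w_nonneg: "w a b \<ge> 0"
  using weighted by (auto simp: weighted_graph_def)

lemma finite_nbrs: "finite (nbrs w z)"
  using loc_finite by (simp add: locally_finite_def)

lemma in_nbrs_iff: "u \<in> nbrs w z \<longleftrightarrow> w z u > 0"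
  by (simp add: nbrs_def adj_def)

lemma in_nbrs_sym: "u \<in> nbrs w z \<longleftrightarrow> z \<in> nbrs w u"
  by (simp add: in_nbrs_iff w_sym)

lemma w_eq_0: "u \<notin> nbrs w z \<Longrightarrow> w z u = 0"
  using w_nonneg[of z u] by (auto simp: in_nbrs_iff)

lemma adj_path_exists: "\<exists>n. (adj w ^^ n) a b"
  using connected by (simp add: connected_graph_def)

lemma nbrs_nonempty: "nbrs w z \<noteq> {}"
proof -
  obtain t where t: "t \<noteq> z" using nontrivial by metis
  obtain n where n: "(adj w ^^ n) z t" using adj_path_exists by blast
  with t obtain m where "(adj w ^^ Suc m) z t" by (cases n) auto
  then obtain v where "adj w z v" using relpowp_Suc_D2 by metis
  then show ?thesis by (auto simp: nbrs_def)
qed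

lemma deg_pos: "deg w z > 0"
  unfolding deg_def using finite_nbrs nbrs_nonempty
  by (intro sum_pos) (auto simp: in_nbrs_iff)

lemma transition_weight_nonneg: "w z u / deg w z \<ge> 0"
  by (intro divide_nonneg_pos w_nonneg deg_pos)

lemma transition_weight_pos: "u \<in> nbrs w z \<Longrightarrow> w z u / deg w z > 0"
  using deg_pos[of z] by (simp add: in_nbrs_iff)

lemma pmf_step: "pmf (step w z) u = w z u / deg w z"
  unfolding step_def
proof (rule pmf_embed_pmf)
  show "0 \<le> w z u / deg w z" for u by (rule transition_weight_nonneg)
  have "(\<integral>\<^sup>+u. ennreal (w z u / deg w z) \<partial>count_space UNIV)
      = (\<Sum>u\<in>nbrs w z. ennreal (w z u / deg w z))"
    by (rule nn_integral_count_space') (auto simp: finite_nbrs w_eq_0)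
  also have "\<dots> = ennreal (\<Sum>u\<in>nbrs w z. w z u / deg w z)"
    by (subst sum_ennreal) (auto intro: transition_weight_nonneg)
  also have "(\<Sum>u\<in>nbrs w z. w z u / deg w z) = 1"
    using deg_pos[of z] by (simp add: sum_divide_distrib[symmetric] deg_def)
  finally show "(\<integral>\<^sup>+u. ennreal (w z u / deg w z) \<partial>count_space UNIV) = 1" by simp
qed

lemma set_pmf_step: "set_pmf (step w z) \<subseteq> nbrs w z"
  using w_nonneg[of z] by (auto simp: set_pmf_eq pmf_step in_nbrs_iff less_le)

lemma integral_step: "(\<integral>u. h u \<partial>measure_pmf (step w z)) = transition_op w h z"
  unfolding transition_op_def
  by (subst integral_measure_pmf_real[where A="nbrs w z"])
     (use finite_nbrs set_pmf_step in \<open>auto simp: pmf_step intro!: sum.cong\<close>)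

lemma prob_walk_Suc_transition:
  "measure_pmf.prob (walk w (Suc n) g) E
     = transition_op w (\<lambda>u. measure_pmf.prob (walk w n u) ((#) g -` E)) g"
  by (simp only: prob_walk_Suc integral_step)

subsection \<open>The transition operator\<close>

lemma transition_op_const [simp]: "transition_op w (\<lambda>_. c) z = c"
  using deg_pos[of z]
  by (simp add: transition_op_def sum_distrib_right[symmetric] sum_divide_distrib[symmetric] deg_def)

lemma transition_op_add: "transition_op w (\<lambda>u. h u + k u) z = transition_op w h z + transition_op w k z"
  by (simp add: transition_op_def distrib_left sum.distrib)

lemma transition_op_cmult: "transition_op w (\<lambda>u. c * h u) z = c * transition_op w h z"
  by (simp add: transition_op_def sum_distrib_left mult_ac)

lemma transition_op_sum:
  "transition_op w (\<lambda>u. \<Sum>j\<in>J. h j u) z = (\<Sum>j\<in>J. transition_op w (h j) z)"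
  by (simp add: transition_op_def sum_distrib_left sum.swap[of _ J])

lemma transition_op_mono:
  "(\<And>u. u \<in> nbrs w z \<Longrightarrow> h u \<le> k u) \<Longrightarrow> transition_op w h z \<le> transition_op w k z"
  unfolding transition_op_def by (intro sum_mono mult_left_mono transition_weight_nonneg) auto

lemma transition_op_nonneg: "(\<And>u. h u \<ge> 0) \<Longrightarrow> transition_op w h z \<ge> 0"
  using transition_op_mono[of z "\<lambda>_. 0" h] by simp

lemma transition_op_le_const: "(\<And>u. h u \<le> c) \<Longrightarrow> transition_op w h z \<le> c"
  using transition_op_mono[of z h "\<lambda>_. c"] by simp

lemma transition_op_cong:
  "(\<And>u. u \<in> nbrs w z \<Longrightarrow> h u = k u) \<Longrightarrow> transition_op w h z = transition_op w k z"
  unfolding transition_op_def by (intro sum.cong) auto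

lemma transition_op_ge_term:
  assumes "\<And>u. h u \<ge> 0" "v \<in> nbrs w z"
  shows "w z v / deg w z * h v \<le> transition_op w h z"
  unfolding transition_op_def
  using assms by (intro member_le_sum mult_nonneg_nonneg transition_weight_nonneg finite_nbrs) auto

lemma transition_op_eq_0_imp:
  assumes "\<And>u. h u \<ge> 0" "transition_op w h z = 0" "v \<in> nbrs w z"
  shows "h v = 0"
proof -
  have "w z v / deg w z * h v \<le> 0"
    using transition_op_ge_term[of h, OF assms(1,3)] assms(2) by (simp only:)
  then show ?thesis
    using transition_weight_pos[OF assms(3)] assms(1)[of v]
    by (metis antisym mult_le_0_iff not_less)
qed

subsection \<open>Hitting probabilities\<close>

lemma hit_before_0: "hit_before w a b 0 g = (if g = a then 1 else 0)"
  by (simp add: hit_before_def)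

lemma hit_before_Suc:
  assumes "a \<noteq> b"
  shows "hit_before w a b (Suc n) g
    = (if g = a then 1 else if g = b then 0 else transition_op w (hit_before w a b n) g)"
proof -
  let ?E = "{p. a \<in> set p \<and> b \<notin> set (takeWhile (\<lambda>v. v \<noteq> a) p)}"
  have shift: "(#) g -` ?E = (if g = a then UNIV else if g = b then {} else ?E)"
    using assms by auto
  show ?thesis
    unfolding hit_before_def prob_walk_Suc_transition shift
    by (simp add: hit_before_def[symmetric])
qed

lemma hit_within_0: "hit_within w a b 0 g = (if g = a \<or> g = b then 1 else 0)"
  by (auto simp: hit_within_def)

lemma hit_within_Suc:
  "hit_within w a b (Suc n) g = (if g = a \<or> g = b then 1 else transition_op w (hit_within w a b n) g)"
proof -
  let ?E = "{p. a \<in> set p \<or> b \<in> set p}"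
  have shift: "(#) g -` ?E = (if g = a \<or> g = b then UNIV else ?E)"
    by auto
  show ?thesis
    unfolding hit_within_def prob_walk_Suc_transition shift
    by (simp add: hit_within_def[symmetric])
qed

lemma hit_before_bounds: "0 \<le> hit_before w a b n g" "hit_before w a b n g \<le> 1"
  by (simp_all add: hit_before_def)

lemma hit_within_bounds: "0 \<le> hit_within w a b n g" "hit_within w a b n g \<le> 1"
  by (simp_all add: hit_within_def)

lemma hit_before_mono_Suc:
  assumes "a \<noteq> b"
  shows "hit_before w a b n g \<le> hit_before w a b (Suc n) g"
proof (induction n arbitrary: g)
  case 0
  then show ?case
    using assms by (auto simp: hit_before_0 hit_before_Suc intro!: transition_op_nonneg hit_before_bounds)
next
  case (Suc n)
  then show ?case
    using assms by (auto simp: hit_before_Suc[OF assms] intro!: transition_op_mono)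
qed

lemma hit_within_mono_Suc: "hit_within w a b n g \<le> hit_within w a b (Suc n) g"
proof (induction n arbitrary: g)
  case 0
  then show ?case by (auto simp: hit_within_0 hit_within_Suc intro!: transition_op_nonneg hit_within_bounds)
next
  case (Suc n)
  then show ?case by (auto simp: hit_within_Suc[of _ _ "Suc n"] hit_within_Suc[of _ _ n] intro!: transition_op_mono)
qed

lemma hit_within_eq_hit_before:
  assumes "a \<noteq> b"
  shows "hit_within w a b n g = hit_before w a b n g + hit_before w b a n g"
proof (induction n arbitrary: g)
  case 0
  then show ?case using assms by (auto simp: hit_before_0 hit_within_0)
next
  case (Suc n)
  then have "hit_within w a b n = (\<lambda>u. hit_before w a b n u + hit_before w b a n u)"
    by auto
  then show ?case
    using assms by (auto simp: hit_before_Suc hit_within_Suc transition_op_add)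
qed

lemma hit_within_pos: "(adj w ^^ k) g t \<Longrightarrow> t = a \<or> t = b \<Longrightarrow> hit_within w a b k g > 0"
proof (induction k arbitrary: g)
  case 0
  then show ?case by (auto simp: hit_within_0)
next
  case (Suc k)
  from relpowp_Suc_D2[OF Suc.prems(1)] obtain v where v: "v \<in> nbrs w g" "(adj w ^^ k) v t"
    by (auto simp: nbrs_def)
  show ?case
  proof (cases "g = a \<or> g = b")
    case True
    then show ?thesis by (simp add: hit_within_Suc)
  next
    case False
    have "0 < w g v / deg w g * hit_within w a b k v"
      by (intro mult_pos_pos transition_weight_pos Suc.IH v Suc.prems(2))
    also have "\<dots> \<le> transition_op w (hit_within w a b k) g"
      by (intro transition_op_ge_term hit_within_bounds v)
    finally show ?thesis using False by (simp add: hit_within_Suc)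
  qed
qed

lemma hit_before_tendsto:
  "a \<noteq> b \<Longrightarrow> (\<lambda>n. hit_before w a b n g) \<longlonglongrightarrow> hit_first w g a b"
  unfolding hit_first_def hit_before_def[symmetric]
  by (rule LIMSEQ_incseq_SUP)
     (auto intro!: bdd_aboveI incseq_SucI hit_before_bounds hit_before_mono_Suc)

lemma hit_within_tendsto: "(\<lambda>n. hit_within w a b n g) \<longlonglongrightarrow> hit_either w g a b"
  unfolding hit_either_def hit_within_def[symmetric]
  by (rule LIMSEQ_incseq_SUP)
     (auto intro!: bdd_aboveI incseq_SucI hit_within_bounds hit_within_mono_Suc)

lemma hit_either_pos: "hit_either w g a b > 0"
proof -
  obtain k where k: "(adj w ^^ k) g a" using adj_path_exists by blast
  have "0 < hit_within w a b k g" using hit_within_pos[OF k] by simp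
  also have "\<dots> \<le> hit_either w g a b"
    unfolding hit_either_def hit_within_def[symmetric]
    by (intro cSUP_upper bdd_aboveI) (auto intro: hit_within_bounds)
  finally show ?thesis .
qed

lemma hit_either_eq_hit_first:
  assumes "a \<noteq> b"
  shows "hit_either w g a b = hit_first w g a b + hit_first w g b a"
proof -
  have "(\<lambda>n. hit_within w a b n g) \<longlonglongrightarrow> hit_first w g a b + hit_first w g b a"
    unfolding hit_within_eq_hit_before[OF assms]
    using assms by (intro tendsto_add hit_before_tendsto) auto
  then show ?thesis
    using hit_within_tendsto LIMSEQ_unique by blast
qed

lemma cond_hit_same: "cond_hit w g a a = 1"
proof -
  have "{p. a \<in> set p \<and> a \<notin> set (takeWhile (\<lambda>v. v \<noteq> a) p)} = {p. a \<in> set p \<or> a \<in> set p}"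
    by (auto dest: set_takeWhileD)
  then have "hit_first w g a a = hit_either w g a a"
    by (simp add: hit_first_def hit_either_def)
  then show ?thesis
    using hit_either_pos[of g a a] by (simp add: cond_hit_def)
qed

subsection \<open>The walk killed on a set\<close>

lemma killed_op_outside: "z \<notin> K \<Longrightarrow> killed_op w K h z = transition_op w h z"
  by (simp add: killed_op_def)

lemma killed_op_inside: "z \<in> K \<Longrightarrow> killed_op w K h z = 0"
  by (simp add: killed_op_def)

lemma killed_op_add: "killed_op w K (\<lambda>u. h u + k u) = (\<lambda>z. killed_op w K h z + killed_op w K k z)"
  by (auto simp: killed_op_def transition_op_add)

lemma killed_op_cmult: "killed_op w K (\<lambda>u. c * h u) = (\<lambda>z. c * killed_op w K h z)"
  by (auto simp: killed_op_def transition_op_cmult)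

lemma killed_op_sum: "killed_op w K (\<lambda>u. \<Sum>j\<in>J. h j u) = (\<lambda>z. \<Sum>j\<in>J. killed_op w K (h j) z)"
  by (auto simp: killed_op_def transition_op_sum)

lemma killed_op_mono: "(\<And>u. h u \<le> k u) \<Longrightarrow> killed_op w K h z \<le> killed_op w K k z"
  by (auto simp: killed_op_def intro!: transition_op_mono)

lemma killed_op_le_const: "(\<And>u. h u \<le> c) \<Longrightarrow> 0 \<le> c \<Longrightarrow> killed_op w K h z \<le> c"
  by (auto simp: killed_op_def intro!: transition_op_le_const)

lemma killed_pow_add:
  "(killed_op w K ^^ n) (\<lambda>u. h u + k u) = (\<lambda>z. (killed_op w K ^^ n) h z + (killed_op w K ^^ n) k z)"
  by (induction n) (simp_all add: killed_op_add)

lemma killed_pow_cmult: "(killed_op w K ^^ n) (\<lambda>u. c * h u) = (\<lambda>z. c * (killed_op w K ^^ n) h z)"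
  by (induction n) (simp_all add: killed_op_cmult)

lemma killed_pow_sum:
  "(killed_op w K ^^ n) (\<lambda>u. \<Sum>j\<in>J. h j u) = (\<lambda>z. \<Sum>j\<in>J. (killed_op w K ^^ n) (h j) z)"
  by (induction n) (simp_all add: killed_op_sum)

lemma killed_pow_mono: "(\<And>u. h u \<le> k u) \<Longrightarrow> (killed_op w K ^^ n) h z \<le> (killed_op w K ^^ n) k z"
  by (induction n arbitrary: z) (auto intro!: killed_op_mono)

lemma killed_pow_le_const: "(\<And>u. h u \<le> c) \<Longrightarrow> 0 \<le> c \<Longrightarrow> (killed_op w K ^^ n) h z \<le> c"
  by (induction n arbitrary: z) (auto intro!: killed_op_le_const)

lemma killed_pow_nonneg: "(\<And>u. 0 \<le> h u) \<Longrightarrow> 0 \<le> (killed_op w K ^^ n) h z"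
proof (induction n arbitrary: z)
  case (Suc n)
  then show ?case by (auto simp: killed_op_def intro!: transition_op_nonneg)
qed simp

lemma killed_pow_tendsto_0_sandwich:
  assumes "\<And>u. \<bar>h u\<bar> \<le> k u" "(\<lambda>n. (killed_op w K ^^ n) k g) \<longlonglongrightarrow> 0"
  shows "(\<lambda>n. (killed_op w K ^^ n) h g) \<longlonglongrightarrow> 0"
proof (rule tendsto_sandwich)
  have "(killed_op w K ^^ n) h g \<le> (killed_op w K ^^ n) k g" for n
    using assms(1) by (intro killed_pow_mono) (simp add: abs_le_iff)
  then show "\<forall>\<^sub>F n in sequentially. (killed_op w K ^^ n) h g \<le> (killed_op w K ^^ n) k g"
    by simp
  have "(killed_op w K ^^ n) (\<lambda>u. - 1 * h u) g \<le> (killed_op w K ^^ n) k g" for n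
    using assms(1) by (intro killed_pow_mono) (simp add: abs_le_iff)
  then show "\<forall>\<^sub>F n in sequentially. - (killed_op w K ^^ n) k g \<le> (killed_op w K ^^ n) h g"
    unfolding killed_pow_cmult by (simp add: minus_le_iff)
  show "(\<lambda>n. - (killed_op w K ^^ n) k g) \<longlonglongrightarrow> 0"
    using tendsto_minus[OF assms(2)] by simp
qed (rule assms(2))

subsection \<open>Leaving a finite set\<close>

lemma stay_prob_bounds: "0 \<le> stay_prob w C m z" "stay_prob w C m z \<le> 1"
proof (induction m arbitrary: z)
  case (Suc m)
  { case 1 then show ?case by (auto intro!: transition_op_nonneg Suc) }
  { case 2 then show ?case by (auto intro!: transition_op_le_const Suc) }
qed simp_all

lemma stay_prob_outside: "z \<notin> C \<Longrightarrow> stay_prob w C m z = 0"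
  by (cases m) auto

lemma stay_prob_antimono_Suc: "stay_prob w C (Suc m) z \<le> stay_prob w C m z"
proof (induction m arbitrary: z)
  case 0
  then show ?case by (auto intro!: transition_op_le_const stay_prob_bounds)
next
  case (Suc m)
  then show ?case by (auto intro!: transition_op_mono)
qed

lemma stay_prob_antimono: "m \<le> m' \<Longrightarrow> stay_prob w C m' z \<le> stay_prob w C m z"
  using lift_Suc_antimono_le[of "\<lambda>m. stay_prob w C m z", OF stay_prob_antimono_Suc] by blast

lemma stay_prob_add_le:
  assumes "\<And>z. stay_prob w C k z \<le> \<delta>"
  shows "stay_prob w C (m + k) z \<le> \<delta> * stay_prob w C m z"
proof (induction m arbitrary: z)
  case 0
  then show ?case
    using assms[of z] stay_prob_outside[of z C k] by (cases "z \<in> C") auto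
next
  case (Suc m)
  have "transition_op w (stay_prob w C (m + k)) z \<le> transition_op w (\<lambda>u. \<delta> * stay_prob w C m u) z"
    by (intro transition_op_mono Suc.IH)
  then show ?case by (simp add: transition_op_cmult)
qed

lemma stay_prob_mult_le:
  assumes "0 \<le> \<delta>" "\<And>z. stay_prob w C k z \<le> \<delta>"
  shows "stay_prob w C (j * k) z \<le> \<delta> ^ j"
proof (induction j arbitrary: z)
  case 0
  then show ?case using stay_prob_bounds(2)[of C 0 z] by simp
next
  case (Suc j)
  have "stay_prob w C (Suc j * k) z = stay_prob w C (j * k + k) z" by (simp add: add.commute)
  also have "\<dots> \<le> \<delta> * stay_prob w C (j * k) z" by (rule stay_prob_add_le[OF assms(2)])
  also have "\<dots> \<le> \<delta> * \<delta> ^ j" by (intro mult_left_mono Suc.IH assms(1))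
  finally show ?case by simp
qed

lemma stay_prob_less_1: "(adj w ^^ k) z t \<Longrightarrow> t \<notin> C \<Longrightarrow> stay_prob w C k z < 1"
proof (induction k arbitrary: z)
  case (Suc k)
  from relpowp_Suc_D2[OF Suc.prems(1)] obtain v where v: "v \<in> nbrs w z" "(adj w ^^ k) v t"
    by (auto simp: nbrs_def)
  have "transition_op w (stay_prob w C k) z < transition_op w (\<lambda>_. 1) z"
    unfolding transition_op_def
  proof (rule sum_strict_mono_ex1[OF finite_nbrs])
    show "\<forall>u\<in>nbrs w z. w z u / deg w z * stay_prob w C k u \<le> w z u / deg w z * 1"
      by (intro ballI mult_left_mono transition_weight_nonneg stay_prob_bounds)
    show "\<exists>u\<in>nbrs w z. w z u / deg w z * stay_prob w C k u < w z u / deg w z * 1"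
      using Suc.IH[OF v(2) Suc.prems(2)] transition_weight_pos[OF v(1)] v(1)
      by (intro bexI[of _ v] mult_strict_left_mono) auto
  qed
  then show ?case by simp
qed simp

text \<open>Within \<open>m\<^sub>0\<close> steps the walk leaves \<open>C\<close> with probability at least \<open>1 - \<delta> > 0\<close>
  from every start, so staying \<open>j m\<^sub>0\<close> steps has probability at most \<open>\<delta>\<^sup>j\<close>.\<close>
lemma stay_prob_uniformly_small:
  assumes "finite C" "t \<notin> C" "\<epsilon> > 0"
  shows "\<exists>m. \<forall>z. stay_prob w C m z \<le> \<epsilon>"
proof -
  have "\<exists>k. stay_prob w C k z < 1" for z
    using adj_path_exists[of z t] stay_prob_less_1 assms(2) by blast
  then obtain k where k: "\<And>z. stay_prob w C (k z) z < 1" by metis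
  define m0 where "m0 = Max (k ` C)"
  have m0: "stay_prob w C m0 z < 1" if "z \<in> C" for z
  proof -
    have "k z \<le> m0" unfolding m0_def using assms(1) that by (intro Max_ge) auto
    then show ?thesis using stay_prob_antimono k[of z] by (meson le_less_trans)
  qed
  define \<delta> where "\<delta> = Max (insert 0 (stay_prob w C m0 ` C))"
  have \<delta>_nonneg: "0 \<le> \<delta>" unfolding \<delta>_def using assms(1) by (intro Max_ge) auto
  have \<delta>_less_1: "\<delta> < 1" unfolding \<delta>_def using assms(1) m0 by (subst Max_less_iff) auto
  have \<delta>_bound: "stay_prob w C m0 z \<le> \<delta>" for z
  proof (cases "z \<in> C")
    case True
    then show ?thesis unfolding \<delta>_def using assms(1) by (intro Max_ge) auto
  qed (use stay_prob_outside \<delta>_nonneg in simp)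
  obtain j where "\<delta> ^ j < \<epsilon>" using real_arch_pow_inv[OF assms(3) \<delta>_less_1] by blast
  then show ?thesis
    using stay_prob_mult_le[OF \<delta>_nonneg \<delta>_bound, of j] by (meson less_imp_le order.trans)
qed

text \<open>A visit to \<open>C\<close> at time \<open>m\<close> either belongs to a sojourn in \<open>C\<close> since time \<open>0\<close>, or the
  walk entered \<open>C\<close> at some time \<open>j < m\<close>, and every entrance into \<open>C\<close> passes through \<open>B\<close>.\<close>
lemma killed_indicator_le_stay_plus_entrances:
  assumes entrance: "\<And>u v. u \<notin> C \<Longrightarrow> u \<notin> K \<Longrightarrow> v \<in> C \<Longrightarrow> v \<in> nbrs w u \<Longrightarrow> u \<in> B"
  shows "(killed_op w K ^^ m) (indicator C) z
           \<le> stay_prob w C m z + (\<Sum>j<m. (killed_op w K ^^ j) (indicator B) z)"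
proof (induction m arbitrary: z)
  case (Suc m)
  have step: "killed_op w K (stay_prob w C m) z \<le> stay_prob w C (Suc m) z + indicator B z"
  proof (cases "z \<in> K \<or> z \<in> C")
    case True
    then show ?thesis using stay_prob_bounds(1)[of C "Suc m" z] by (auto simp: killed_op_def)
  next
    case outside: False
    show ?thesis
    proof (cases "z \<in> B")
      case True
      have "transition_op w (stay_prob w C m) z \<le> 1"
        by (intro transition_op_le_const stay_prob_bounds)
      then show ?thesis using True outside by (simp add: killed_op_def)
    next
      case False
      then have "transition_op w (stay_prob w C m) z = transition_op w (\<lambda>_. 0) z"
        using outside entrance by (intro transition_op_cong) (metis stay_prob_outside)
      then show ?thesis using outside False by (simp add: killed_op_def)
    qed
  qed
  have "(killed_op w K ^^ Suc m) (indicator C) z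
      \<le> killed_op w K (\<lambda>u. stay_prob w C m u + (\<Sum>j<m. (killed_op w K ^^ j) (indicator B) u)) z"
    by (simp add: killed_op_mono Suc.IH)
  also have "\<dots> = killed_op w K (stay_prob w C m) z + (\<Sum>j<m. (killed_op w K ^^ Suc j) (indicator B) z)"
    by (simp add: killed_op_add killed_op_sum)
  also have "\<dots> \<le> stay_prob w C (Suc m) z + (\<Sum>j<Suc m. (killed_op w K ^^ j) (indicator B) z)"
    using step by (simp add: sum.lessThan_Suc_shift del: sum.lessThan_Suc)
  finally show ?case .
qed simp

lemma killed_indicator_tendsto_0:
  assumes "finite C" "t \<notin> C"
    and entrance: "\<And>u v. u \<notin> C \<Longrightarrow> u \<notin> K \<Longrightarrow> v \<in> C \<Longrightarrow> v \<in> nbrs w u \<Longrightarrow> u \<in> B"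
    and B_tendsto: "(\<lambda>j. (killed_op w K ^^ j) (indicator B) g) \<longlonglongrightarrow> 0"
  shows "(\<lambda>n. (killed_op w K ^^ n) (indicator C) g) \<longlonglongrightarrow> 0"
proof (rule LIMSEQ_I)
  fix r :: real
  assume r: "0 < r"
  then obtain m where m: "\<And>z. stay_prob w C m z \<le> r/2"
    using stay_prob_uniformly_small[OF assms(1,2), of "r/2"] by auto
  have "(\<lambda>k. \<Sum>j<m. (killed_op w K ^^ (k + j)) (indicator B) g) \<longlonglongrightarrow> (\<Sum>j<m. 0)"
    by (intro tendsto_sum LIMSEQ_ignore_initial_segment[OF B_tendsto])
  then obtain k0 where k0:
    "\<And>k. k \<ge> k0 \<Longrightarrow> norm ((\<Sum>j<m. (killed_op w K ^^ (k + j)) (indicator B) g) - 0) < r/2"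
    using LIMSEQ_D[OF _ half_gt_zero[OF r]] by fastforce
  have bound: "(killed_op w K ^^ (k + m)) (indicator C) g < r" if "k \<ge> k0" for k
  proof -
    have "(killed_op w K ^^ (k + m)) (indicator C) g
        = (killed_op w K ^^ k) ((killed_op w K ^^ m) (indicator C)) g"
      by (simp add: funpow_add)
    also have "\<dots> \<le> (killed_op w K ^^ k)
                     (\<lambda>z. stay_prob w C m z + (\<Sum>j<m. (killed_op w K ^^ j) (indicator B) z)) g"
      by (intro killed_pow_mono killed_indicator_le_stay_plus_entrances entrance)
    also have "\<dots> = (killed_op w K ^^ k) (stay_prob w C m) g
                   + (\<Sum>j<m. (killed_op w K ^^ (k + j)) (indicator B) g)"
      by (simp add: killed_pow_add killed_pow_sum funpow_add)
    also have "\<dots> < r/2 + r/2"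
    proof (rule add_le_less_mono)
      show "(killed_op w K ^^ k) (stay_prob w C m) g \<le> r/2"
        using m r by (intro killed_pow_le_const) auto
      show "(\<Sum>j<m. (killed_op w K ^^ (k + j)) (indicator B) g) < r/2"
        using k0[OF that] by simp
    qed
    finally show ?thesis by simp
  qed
  show "\<exists>n0. \<forall>n\<ge>n0. norm ((killed_op w K ^^ n) (indicator C) g - 0) < r"
  proof (intro exI allI impI)
    fix n
    assume "k0 + m \<le> n"
    then have "n = (n - m) + m" "k0 \<le> n - m" by auto
    moreover have "0 \<le> (killed_op w K ^^ n) (indicator C) g"
      by (intro killed_pow_nonneg) simp
    ultimately show "norm ((killed_op w K ^^ n) (indicator C) g - 0) < r"
      using bound[of "n - m"] by simp
  qed
qed

end

subsection \<open>Functions harmonic off two vertices\<close>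

lemma finite_support_bounded:
  fixes f :: "'a \<Rightarrow> real"
  assumes "finite {z. f z \<noteq> 0}"
  obtains M where "\<And>z. \<bar>f z\<bar> \<le> M"
proof
  fix z
  show "\<bar>f z\<bar> \<le> Max (insert 0 (abs ` f ` {z. f z \<noteq> 0}))"
    using assms by (cases "f z = 0") (auto intro: Max_ge)
qed

locale harmonic_off_pair =
  fixes w :: "'v \<Rightarrow> 'v \<Rightarrow> real" and x y :: 'v and f :: "'v \<Rightarrow> real"
  assumes graph: "weighted_graph w" "connected_graph w" "locally_finite w"
    and x_ne_y: "x \<noteq> y"
    and finite_support: "finite {z. f z \<noteq> 0}"
    and harmonic: "\<And>z. z \<noteq> x \<Longrightarrow> z \<noteq> y \<Longrightarrow> harmonic_at w f z"
begin

sublocale random_walk_graph w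
  using graph x_ne_y by unfold_locales blast+

abbreviation Q :: "('v \<Rightarrow> real) \<Rightarrow> 'v \<Rightarrow> real" where
  "Q \<equiv> killed_op w {x, y}"

lemma transition_op_f: "z \<noteq> x \<Longrightarrow> z \<noteq> y \<Longrightarrow> transition_op w f z = f z"
  using harmonic[of z] deg_pos[of z] unfolding harmonic_at_def transition_op_def
  by (simp add: sum_divide_distrib)

definition f_off_pair :: "'v \<Rightarrow> real" where
  "f_off_pair z = (if z \<in> {x, y} then 0 else f z)"

lemma f_eq_hit_before_plus_remainder:
  "f g = f x * hit_before w x y n g + f y * hit_before w y x n g + (Q ^^ n) f_off_pair g"
proof (induction n arbitrary: g)
  case 0
  then show ?case using x_ne_y by (auto simp: hit_before_0 f_off_pair_def)
next
  case (Suc n)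
  show ?case
  proof (cases "g = x \<or> g = y")
    case True
    then show ?thesis using x_ne_y by (auto simp: hit_before_Suc killed_op_def)
  next
    case False
    have f_expand:
      "f = (\<lambda>u. f x * hit_before w x y n u + f y * hit_before w y x n u + (Q ^^ n) f_off_pair u)"
      using Suc.IH by blast
    have "transition_op w f g = f x * transition_op w (hit_before w x y n) g
        + f y * transition_op w (hit_before w y x n) g + transition_op w ((Q ^^ n) f_off_pair) g"
      by (subst f_expand) (simp add: transition_op_add transition_op_cmult)
    then show ?thesis
      using False x_ne_y transition_op_f[of g] by (simp add: hit_before_Suc killed_op_outside)
  qed
qed

definition local_variance :: "'v \<Rightarrow> real" where
  "local_variance z = (if z \<in> {x, y} then 0 else transition_op w (\<lambda>u. (f u - f z)\<^sup>2) z)"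

lemma local_variance_nonneg: "0 \<le> local_variance z"
  by (auto simp: local_variance_def intro!: transition_op_nonneg)

lemma transition_op_f_square:
  assumes "z \<noteq> x" "z \<noteq> y"
  shows "transition_op w (\<lambda>u. (f u)\<^sup>2) z = (f z)\<^sup>2 + local_variance z"
proof -
  have "transition_op w (\<lambda>u. (f u - f z)\<^sup>2) z
      = transition_op w (\<lambda>u. (f u)\<^sup>2 + ((- 2 * f z) * f u + (f z)\<^sup>2)) z"
    by (rule transition_op_cong) (simp add: power2_eq_square algebra_simps)
  also have "\<dots> = transition_op w (\<lambda>u. (f u)\<^sup>2) z + ((- 2 * f z) * transition_op w f z + (f z)\<^sup>2)"
    by (simp only: transition_op_add transition_op_cmult transition_op_const)
  finally show ?thesis
    using assms transition_op_f[OF assms] by (simp add: local_variance_def power2_eq_square)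
qed

text \<open>Telescoping \<open>P (f\<^sup>2) = f\<^sup>2 + local_variance\<close> along the killed walk.\<close>
lemma energy_bound:
  assumes "\<And>z. (f z)\<^sup>2 \<le> M"
  shows "(f g)\<^sup>2 + (\<Sum>k<n. (Q ^^ k) local_variance g) \<le> M"
proof (induction n arbitrary: g)
  case 0
  then show ?case using assms by simp
next
  case (Suc n)
  have shift: "(\<Sum>k<Suc n. (Q ^^ k) local_variance g)
      = local_variance g + (\<Sum>k<n. Q ((Q ^^ k) local_variance) g)"
    by (simp add: sum.lessThan_Suc_shift del: sum.lessThan_Suc)
  show ?case
  proof (cases "g = x \<or> g = y")
    case True
    then show ?thesis
      using assms[of g] unfolding shift by (auto simp: local_variance_def killed_op_inside)
  next
    case False
    then have "(f g)\<^sup>2 + (\<Sum>k<Suc n. (Q ^^ k) local_variance g)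
        = transition_op w (\<lambda>u. (f u)\<^sup>2 + (\<Sum>k<n. (Q ^^ k) local_variance u)) g"
      unfolding shift
      by (simp add: transition_op_f_square transition_op_add transition_op_sum killed_op_outside)
    also have "\<dots> \<le> M"
      by (intro transition_op_le_const Suc.IH)
    finally show ?thesis .
  qed
qed

lemma killed_variance_tendsto_0: "(\<lambda>k. (Q ^^ k) local_variance g) \<longlonglongrightarrow> 0"
proof -
  obtain M where M: "\<And>z. \<bar>f z\<bar> \<le> M" using finite_support_bounded[OF finite_support] by blast
  have "(f z)\<^sup>2 \<le> M\<^sup>2" for z
    using power_mono[OF M[of z] abs_ge_zero, of 2] by simp
  then have "(f g)\<^sup>2 + (\<Sum>k<n. (Q ^^ k) local_variance g) \<le> M\<^sup>2" for n
    by (rule energy_bound)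
  then have "(\<Sum>k<n. (Q ^^ k) local_variance g) \<le> M\<^sup>2" for n
    using zero_le_power2[of "f g"] by (smt (verit))
  then have "summable (\<lambda>k. (Q ^^ k) local_variance g)"
    by (intro summableI_nonneg_bounded killed_pow_nonneg local_variance_nonneg)
  then show ?thesis
    by (rule summable_LIMSEQ_zero)
qed

definition varying :: "'v set" where
  "varying = {z. z \<notin> {x, y} \<and> local_variance z > 0}"

definition flat :: "'v set" where
  "flat = {z. z \<notin> {x, y} \<and> local_variance z = 0 \<and> f z \<noteq> 0}"

lemma finite_flat: "finite flat"
  by (rule finite_subset[OF _ finite_support]) (auto simp: flat_def)

lemma flat_nbr_eq:
  assumes "z \<in> flat" "u \<in> nbrs w z"
  shows "f u = f z"
proof -
  have "transition_op w (\<lambda>u. (f u - f z)\<^sup>2) z = 0"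
    using assms(1) by (auto simp: flat_def local_variance_def)
  then have "(f u - f z)\<^sup>2 = 0"
    using assms(2) by (intro transition_op_eq_0_imp) auto
  then show ?thesis by simp
qed

lemma flat_entrance:
  assumes "u \<notin> flat" "u \<notin> {x, y}" "v \<in> flat" "v \<in> nbrs w u"
  shows "u \<in> varying"
proof -
  have "f u = f v"
    using flat_nbr_eq[OF assms(3)] assms(4) in_nbrs_sym by blast
  then show ?thesis
    using assms local_variance_nonneg[of u] by (auto simp: flat_def varying_def)
qed

lemma finite_varying: "finite varying"
proof (rule finite_subset)
  show "varying \<subseteq> {z. f z \<noteq> 0} \<union> (\<Union>s\<in>{z. f z \<noteq> 0}. nbrs w s)"
  proof
    fix z
    assume z: "z \<in> varying"
    show "z \<in> {z. f z \<noteq> 0} \<union> (\<Union>s\<in>{z. f z \<noteq> 0}. nbrs w s)"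
    proof (cases "\<exists>u\<in>nbrs w z. f u \<noteq> 0")
      case True
      then show ?thesis using in_nbrs_sym by blast
    next
      case False
      then have "transition_op w (\<lambda>u. (f u - f z)\<^sup>2) z = transition_op w (\<lambda>_. (f z)\<^sup>2) z"
        by (intro transition_op_cong) auto
      then show ?thesis using z by (auto simp: varying_def local_variance_def)
    qed
  qed
  show "finite ({z. f z \<noteq> 0} \<union> (\<Union>s\<in>{z. f z \<noteq> 0}. nbrs w s))"
    using finite_support by (intro finite_UnI finite_UN_I finite_nbrs)
qed

lemma killed_varying_tendsto_0: "(\<lambda>k. (Q ^^ k) (indicator varying) g) \<longlonglongrightarrow> 0"
proof -
  define c where "c = Min (insert 1 (local_variance ` varying))"
  have c_pos: "c > 0"
    unfolding c_def using finite_varying by (subst Min_gr_iff) (auto simp: varying_def)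
  have "\<bar>indicator varying z\<bar> \<le> (1 / c) * local_variance z" for z
  proof (cases "z \<in> varying")
    case True
    then have "c \<le> local_variance z"
      unfolding c_def using finite_varying by (intro Min_le) auto
    then show ?thesis using True c_pos by simp
  qed (use c_pos local_variance_nonneg in simp)
  moreover have "(\<lambda>k. (Q ^^ k) (\<lambda>z. (1 / c) * local_variance z) g) \<longlonglongrightarrow> 0"
    using tendsto_mult_left[OF killed_variance_tendsto_0, of "1 / c" g]
    unfolding killed_pow_cmult by simp
  ultimately show ?thesis
    by (rule killed_pow_tendsto_0_sandwich)
qed

lemma killed_flat_tendsto_0: "(\<lambda>k. (Q ^^ k) (indicator flat) g) \<longlonglongrightarrow> 0"
proof (rule killed_indicator_tendsto_0[OF finite_flat, where B = varying])
  show "x \<notin> flat" by (simp add: flat_def)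
qed (use flat_entrance killed_varying_tendsto_0 in auto)

lemma f_off_pair_bound:
  assumes "\<And>z. \<bar>f z\<bar> \<le> M"
  shows "\<bar>f_off_pair z\<bar> \<le> M * (indicator varying z + indicator flat z)"
proof (cases "z \<notin> {x, y} \<and> f z \<noteq> 0")
  case True
  then have "z \<in> varying \<and> z \<notin> flat \<or> z \<in> flat \<and> z \<notin> varying"
    using local_variance_nonneg[of z] by (auto simp: varying_def flat_def)
  then show ?thesis
    using True assms[of z] by (auto simp: f_off_pair_def)
next
  case False
  have "0 \<le> M" using assms[of z] by linarith
  then show ?thesis using False by (auto simp: f_off_pair_def)
qed

lemma remainder_tendsto_0: "(\<lambda>n. (Q ^^ n) f_off_pair g) \<longlonglongrightarrow> 0"
proof -
  obtain M where "\<And>z. \<bar>f z\<bar> \<le> M" using finite_support_bounded[OF finite_support] by blast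
  then have "\<bar>f_off_pair z\<bar> \<le> M * (indicator varying z + indicator flat z)" for z
    by (rule f_off_pair_bound)
  moreover have "(\<lambda>n. (Q ^^ n) (\<lambda>z. M * (indicator varying z + indicator flat z)) g) \<longlonglongrightarrow> 0"
    using tendsto_mult_left[OF tendsto_add[OF killed_varying_tendsto_0 killed_flat_tendsto_0], of M g]
    by (simp add: killed_pow_cmult killed_pow_add)
  ultimately show ?thesis
    by (rule killed_pow_tendsto_0_sandwich)
qed

lemma f_eq_hit_first: "f g = f x * hit_first w g x y + f y * hit_first w g y x"
proof -
  have "(\<lambda>n. f x * hit_before w x y n g + f y * hit_before w y x n g + (Q ^^ n) f_off_pair g)
      \<longlonglongrightarrow> f x * hit_first w g x y + f y * hit_first w g y x + 0"
    using x_ne_y by (intro tendsto_add tendsto_mult_left hit_before_tendsto remainder_tendsto_0) auto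
  then show ?thesis
    by (simp add: f_eq_hit_before_plus_remainder[symmetric] LIMSEQ_const_iff)
qed

lemma f_eq_hit_either: "f x = f y \<Longrightarrow> f g = f x * hit_either w g x y"
  using f_eq_hit_first[of g] by (simp add: hit_either_eq_hit_first[OF x_ne_y] distrib_left)

lemma boundary_values_differ:
  assumes "f g0 = 0" "f \<noteq> (\<lambda>_. 0)"
  shows "f x \<noteq> f y"
proof
  assume eq: "f x = f y"
  then have "f x * hit_either w g0 x y = 0"
    using f_eq_hit_either assms(1) by metis
  then have "f x = 0"
    using hit_either_pos[of g0 x y] by simp
  then have "f g = 0" for g
    using f_eq_hit_either[OF eq, of g] by simp
  then show False using assms(2) by auto
qed

lemma cond_hit_outside_support:
  assumes "f g = 0" "f x \<noteq> f y"
  shows "cond_hit w g x y = f y / (f y - f x)"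
proof -
  have "hit_first w g x y * (f y - f x) = f y * hit_either w g x y"
    using f_eq_hit_first[of g] assms(1) hit_either_eq_hit_first[OF x_ne_y, of g]
    by (simp add: algebra_simps)
  then show ?thesis
    using hit_either_pos[of g x y] assms(2) by (simp add: cond_hit_def field_simps)
qed

end

theorem lemma6p4:
  fixes w :: "'v \<Rightarrow> 'v \<Rightarrow> real" and e x y :: 'v and f :: "'v \<Rightarrow> real"
  assumes "weighted_graph w"
    and "connected_graph w"
    and "locally_finite w"
    and "vertex_transitive w"
    and "finite {z. f z \<noteq> 0}"
    and "f \<noteq> (\<lambda>_. 0)"
    and "\<forall>z. z \<noteq> x \<and> z \<noteq> y \<longrightarrow> harmonic_at w f z"
  shows "\<exists>N::nat. N > 0 \<and> (\<exists>c. \<forall>g. gdist w e g \<ge> N \<longrightarrow> cond_hit w g x y = c)"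
proof -
  define N where "N = Suc (Max (gdist w e ` insert x (insert y {z. f z \<noteq> 0})))"
  have far: "f g = 0 \<and> g \<noteq> x" if "N \<le> gdist w e g" for g
    using that assms(5) Max_ge[of "gdist w e ` insert x (insert y {z. f z \<noteq> 0})" "gdist w e g"]
    by (auto simp: N_def)
  have "\<exists>c. \<forall>g. N \<le> gdist w e g \<longrightarrow> cond_hit w g x y = c"
  proof (cases "\<exists>g0. N \<le> gdist w e g0")
    case False
    then show ?thesis by blast
  next
    case True
    then obtain g0 where g0: "N \<le> gdist w e g0" ..
    show ?thesis
    proof (cases "x = y")
      case True
      interpret random_walk_graph w
        \<comment> \<open>\<open>g0 \<noteq> x\<close> rules out the one-vertex graph, on which \<open>deg\<close> vanishes\<close>
        using assms(1-3) far[OF g0] by unfold_locales blast+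
      show ?thesis
        using True cond_hit_same by blast
    next
      case False
      interpret harmonic_off_pair w x y f
        using assms(1-3,5,7) False by unfold_locales auto
      have "f x \<noteq> f y"
        using boundary_values_differ far[OF g0] assms(6) by blast
      then show ?thesis
        using cond_hit_outside_support far by blast
    qed
  qed
  then show ?thesis
    by (intro exI[of _ N]) (simp add: N_def)
qed

end
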